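(* In the setting described in the context, suppose $\tilde b\preceq_{hr}\tilde k$, meaning that $p\mapsto\tilde b(p)/\tilde k(p)$ is non-decreasing on $(0,1)$. Here $\tilde k(p)=(1+\theta)p+k(p)$ and $\tilde b(p)=1-b(1-p)$. Suppose also that $u$ is the identity function on $\mathbb{R}$. Then there exists $m\in[0,\infty]$ such that the indemnity $I^*(x)=\min(x,m)$ maximizes $I\mapsto\rho_b(u(w-X+I(X)-\pi(I(X))))$ over $\mathcal{I}_c$.
   Context: Let $X\ge0$ be a random variable with $\mathbb{E}X<\infty$, distribution function $F_X$ and survival function $S_X$. $\mathcal{I}_c$ is the set of functions $I:[0,\infty)\to[0,\infty)$ with $0\le I(x)\le x$ and $0\le I(x)-I(y)\le x-y$ for $0\le y\le x$. For $j:[0,1]\to\mathbb{R}$ and $Y$ essentially bounded below, set $$\rho_j(Y)=\int_{-\infty}^0 \big(j(S_Y(t))-j(1)\big)\,dt+\int_0^\infty j(S_Y(t))\,dt.$$ The premium is $\pi(Y)=(1+\theta)\mathbb{E}Y+\rho_k(Y)$, with $\theta>-1$ and $k:[0,1]\to[0,\infty)$ continuous and concave with $k(0)=k(1)=0$. The buyer has wealth $w$. $b:[0,1]\to[0,1]$ is continuously differentiable, strictly increasing and convex, with $b(0)=0$ and $b(1)=1$. All relevant quantities are assumed finite. *)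

theory Defs
  imports "HOL-Probability.Probability"
begin

definition surv :: "'a measure \<Rightarrow> ('a \<Rightarrow> real) \<Rightarrow> real \<Rightarrow> real" where
  "surv M Y t = measure M {\<omega> \<in> space M. Y \<omega> > t}"

definition rho :: "(real \<Rightarrow> real) \<Rightarrow> 'a measure \<Rightarrow> ('a \<Rightarrow> real) \<Rightarrow> real" where
  "rho j M Y = (LBINT t:{..0}. j (surv M Y t) - j 1) + (LBINT t:{0<..}. j (surv M Y t))"

definition premium :: "real \<Rightarrow> (real \<Rightarrow> real) \<Rightarrow> 'a measure \<Rightarrow> ('a \<Rightarrow> real) \<Rightarrow> real" where
  "premium \<theta> k M Y = (1 + \<theta>) * (\<integral>\<omega>. Y \<omega> \<partial>M) + rho k M Y"

text \<open>Admissible indemnities I_c (only values on [0,oo) matter).\<close>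
definition Ic :: "(real \<Rightarrow> real) set" where
  "Ic = {I. (\<forall>x\<ge>0. 0 \<le> I x \<and> I x \<le> x) \<and>
            (\<forall>x y. 0 \<le> y \<and> y \<le> x \<longrightarrow> 0 \<le> I x - I y \<and> I x - I y \<le> x - y)}"

text \<open>Final wealth of the buyer with indemnity I (u = identity).\<close>
definition wealth :: "real \<Rightarrow> real \<Rightarrow> (real \<Rightarrow> real) \<Rightarrow> 'a measure \<Rightarrow> ('a \<Rightarrow> real)
    \<Rightarrow> (real \<Rightarrow> real) \<Rightarrow> 'a \<Rightarrow> real" where
  "wealth w \<theta> k M X I = (\<lambda>\<omega>. w - X \<omega> + I (X \<omega>) - premium \<theta> k M (\<lambda>\<omega>'. I (X \<omega>')))"

definition layer :: "ereal \<Rightarrow> real \<Rightarrow> real" where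
  "layer m x = real_of_ereal (min (ereal x) m)"

end

theory Submission
  imports Defs
begin

(*
  With u the identity, the objective is translation invariant, and writing R = id - I for the
  retention one gets

    rho_b(wealth I) = w - [ int_0^oo kt(S_{I(X)}(t)) dt + int_0^oo bt(S_{R(X)}(t)) dt ],

  where kt p = (1 + theta) p + k p and bt p = 1 - b (1 - p); so the buyer minimises the bracket.
  For I in Ic both I and R are nondecreasing and continuous with dI + dR = dt on [0,oo).
  Substituting generalized inverses turns the bracket into
  int kt(S_X(t)) dI(t) + int bt(S_X(t)) dR(t), which is at least int min(kt(S_X t), bt(S_X t)) dt.
  By the hazard-rate order, {p in (0,1]. bt p < kt p} is an initial segment, so as S_X decreases
  the minimum is kt(S_X t) up to a threshold m and bt(S_X t) after it. The layer min(x, m) has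
  dI = dt below m and dR = dt above m, hence attains the bound.
*)

section \<open>Generalized inverses\<close>

text \<open>
  For \<open>\<phi>\<close> nondecreasing and continuous on \<open>[0,\<infinity>)\<close> with \<open>\<phi> 0 = 0\<close>, \<open>gen_inv \<phi>\<close> is the
  largest right inverse of \<open>\<phi>\<close> on \<open>inv_dom \<phi> = (0, sup \<phi>)\<close>; outside \<open>inv_dom \<phi>\<close> the
  supremum is junk.
\<close>
definition gen_inv :: "(real \<Rightarrow> real) \<Rightarrow> real \<Rightarrow> real" where
  "gen_inv \<phi> s = Sup {t. 0 \<le> t \<and> \<phi> t \<le> s}"

definition inv_dom :: "(real \<Rightarrow> real) \<Rightarrow> real set" where
  "inv_dom \<phi> = {s. 0 < s \<and> (\<exists>x\<ge>0. s < \<phi> x)}"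

lemma inv_dom_pos: "s \<in> inv_dom \<phi> \<Longrightarrow> 0 < s"
  unfolding inv_dom_def by simp

lemma open_inv_dom: "open (inv_dom \<phi>)"
proof -
  have "inv_dom \<phi> = (\<Union>x\<in>{0..}. {0<..<\<phi> x})"
    unfolding inv_dom_def by auto
  then show ?thesis by (metis open_UN open_greaterThanLessThan)
qed

context
  fixes \<phi> :: "real \<Rightarrow> real"
  assumes mono: "mono_on {0..} \<phi>" and cont: "continuous_on {0..} \<phi>" and zero: "\<phi> 0 = 0"
begin

lemma gen_inv_bounds:
  assumes s: "s \<in> inv_dom \<phi>"
  shows "0 \<le> gen_inv \<phi> s" "\<phi> (gen_inv \<phi> s) \<le> s"
    and "0 \<le> t \<Longrightarrow> \<phi> t \<le> s \<Longrightarrow> t \<le> gen_inv \<phi> s"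
proof -
  let ?A = "{t. 0 \<le> t \<and> \<phi> t \<le> s}"
  from s obtain x where x: "0 \<le> x" "s < \<phi> x" "0 < s"
    unfolding inv_dom_def by auto
  have "0 \<in> ?A" using zero x by simp
  moreover have bdd: "bdd_above ?A"
  proof (rule bdd_aboveI)
    fix t assume t: "t \<in> ?A"
    show "t \<le> x"
    proof (rule ccontr)
      assume "\<not> t \<le> x"
      then have "\<phi> x \<le> \<phi> t" using t x by (intro mono_onD[OF mono]) auto
      then show False using t x by simp
    qed
  qed
  moreover have "?A = {0..} \<inter> \<phi> -` {..s}" by auto
  then have "closed ?A" using continuous_closed_preimage[OF cont] by simp
  ultimately have "gen_inv \<phi> s \<in> ?A"
    unfolding gen_inv_def by (intro closed_contains_Sup) auto
  then show "0 \<le> gen_inv \<phi> s" "\<phi> (gen_inv \<phi> s) \<le> s" by auto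
  show "0 \<le> t \<Longrightarrow> \<phi> t \<le> s \<Longrightarrow> t \<le> gen_inv \<phi> s"
    unfolding gen_inv_def using bdd by (intro cSup_upper) auto
qed

lemma gen_inv_less_iff:
  assumes s: "s \<in> inv_dom \<phi>" and t: "0 \<le> t"
  shows "gen_inv \<phi> s < t \<longleftrightarrow> s < \<phi> t"
proof
  assume "gen_inv \<phi> s < t"
  then show "s < \<phi> t" using gen_inv_bounds(3)[OF s t] by linarith
next
  assume "s < \<phi> t"
  moreover have "t \<le> gen_inv \<phi> s \<Longrightarrow> \<phi> t \<le> \<phi> (gen_inv \<phi> s)"
    using gen_inv_bounds(1)[OF s] t by (intro mono_onD[OF mono]) auto
  ultimately show "gen_inv \<phi> s < t" using gen_inv_bounds(2)[OF s] by linarith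
qed

lemma apply_gen_inv:
  assumes s: "s \<in> inv_dom \<phi>"
  shows "\<phi> (gen_inv \<phi> s) = s"
proof -
  from s obtain x where x: "0 \<le> x" "s < \<phi> x" "0 < s"
    unfolding inv_dom_def by auto
  have "continuous_on {0..x} \<phi>" using cont by (rule continuous_on_subset) auto
  then obtain t where t: "0 \<le> t" "\<phi> t = s"
    using IVT'[of \<phi> 0 s x] zero x by auto
  then have "t \<le> gen_inv \<phi> s" using gen_inv_bounds(3)[OF s] by simp
  then have "s \<le> \<phi> (gen_inv \<phi> s)" using t by (auto intro: mono_onD[OF mono])
  then show ?thesis using gen_inv_bounds(2)[OF s] by simp
qed

lemma gen_inv_less_set: "{s \<in> inv_dom \<phi>. gen_inv \<phi> s < t} = {0<..<\<phi> (max t 0)}"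
proof (cases "0 \<le> t")
  case True
  have "s \<in> inv_dom \<phi> \<and> gen_inv \<phi> s < t \<longleftrightarrow> 0 < s \<and> s < \<phi> t" for s
  proof -
    have "0 < s \<Longrightarrow> s < \<phi> t \<Longrightarrow> s \<in> inv_dom \<phi>"
      unfolding inv_dom_def using True by auto
    then show ?thesis using gen_inv_less_iff[OF _ True, of s] inv_dom_pos[of s \<phi>] by blast
  qed
  then show ?thesis using True by (simp add: set_eq_iff max_absorb1)
next
  case False
  have "\<not> gen_inv \<phi> s < t" if "s \<in> inv_dom \<phi>" for s
    using gen_inv_bounds(1)[OF that] False by simp
  then show ?thesis using False zero by (auto simp: max_absorb2)
qed

end

section \<open>Indemnities and layers\<close>

definition retention :: "(real \<Rightarrow> real) \<Rightarrow> real \<Rightarrow> real" where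
  "retention I x = x - I x"

lemma Ic_bounds: "I \<in> Ic \<Longrightarrow> 0 \<le> x \<Longrightarrow> 0 \<le> I x \<and> I x \<le> x"
  unfolding Ic_def by blast

lemma Ic_zero: "I \<in> Ic \<Longrightarrow> I 0 = 0"
  using Ic_bounds[of I 0] by simp

lemma Ic_increments: "I \<in> Ic \<Longrightarrow> 0 \<le> y \<Longrightarrow> y \<le> x \<Longrightarrow> 0 \<le> I x - I y \<and> I x - I y \<le> x - y"
  unfolding Ic_def by blast

lemma Ic_mono_on: "I \<in> Ic \<Longrightarrow> mono_on {0..} I"
  by (rule mono_onI) (use Ic_increments in force)

lemma Ic_continuous_on:
  assumes "I \<in> Ic"
  shows "continuous_on {0..} I"
proof (rule lipschitz_on_continuous_on)
  show "1-lipschitz_on {0..} I"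
  proof (rule lipschitz_onI)
    fix x y :: real assume "x \<in> {0..}" "y \<in> {0..}"
    then show "dist (I x) (I y) \<le> 1 * dist x y"
      using Ic_increments[OF assms, of y x] Ic_increments[OF assms, of x y]
      unfolding dist_real_def by (cases "y \<le> x") auto
  qed simp
qed

lemma retention_Ic:
  assumes "I \<in> Ic"
  shows "retention I \<in> Ic"
proof -
  have "0 \<le> x - I x \<and> x - I x \<le> x" if "0 \<le> x" for x
    using Ic_bounds[OF assms that] by simp
  moreover have "0 \<le> (x - I x) - (y - I y) \<and> (x - I x) - (y - I y) \<le> x - y"
    if "0 \<le> y" "y \<le> x" for x y
    using Ic_increments[OF assms that] by simp
  ultimately show ?thesis
    unfolding Ic_def retention_def by blast
qed

lemma layer_ereal: "layer (ereal r) x = min x r"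
  unfolding layer_def by (simp add: min_def)

lemma layer_infinity: "layer \<infinity> x = x"
  unfolding layer_def by simp

lemma layer_Ic: "0 \<le> m \<Longrightarrow> layer m \<in> Ic"
  by (cases m) (auto simp: Ic_def layer_ereal layer_infinity min_def)

lemma gen_inv_nonneg_Ic: "I \<in> Ic \<Longrightarrow> s \<in> inv_dom I \<Longrightarrow> 0 \<le> gen_inv I s"
  by (rule gen_inv_bounds(1)[OF Ic_mono_on Ic_continuous_on Ic_zero])

lemma apply_gen_inv_Ic: "I \<in> Ic \<Longrightarrow> s \<in> inv_dom I \<Longrightarrow> I (gen_inv I s) = s"
  by (rule apply_gen_inv[OF Ic_mono_on Ic_continuous_on Ic_zero])

lemma gen_inv_less_set_Ic:
  "I \<in> Ic \<Longrightarrow> {s \<in> inv_dom I. gen_inv I s < a} = {0<..<I (max a 0)}"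
  by (rule gen_inv_less_set[OF Ic_mono_on Ic_continuous_on Ic_zero])

lemma gen_inv_layer_less:
  assumes m: "0 \<le> m" and s: "s \<in> inv_dom (layer m)"
  shows "ereal (gen_inv (layer m) s) < m"
proof (cases m)
  case (real r)
  from s obtain x where "s < layer m x"
    unfolding inv_dom_def by auto
  then have "s < r"
    unfolding real layer_ereal by simp
  moreover have "min (gen_inv (layer m) s) r = s"
    using apply_gen_inv_Ic[OF layer_Ic[OF m] s] unfolding real layer_ereal .
  ultimately show ?thesis
    unfolding real by (simp add: min_def split: if_splits)
qed (use m in auto)

lemma less_gen_inv_retention_layer:
  assumes m: "0 \<le> m" and s: "s \<in> inv_dom (retention (layer m))"
  shows "m < ereal (gen_inv (retention (layer m)) s)"
proof (cases m)
  case (real r)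
  have "gen_inv (retention (layer m)) s - min (gen_inv (retention (layer m)) s) r = s"
    using apply_gen_inv_Ic[OF retention_Ic[OF layer_Ic[OF m]] s]
    unfolding real layer_ereal retention_def .
  then show ?thesis
    using inv_dom_pos[OF s] unfolding real by (simp add: min_def split: if_splits)
next
  case PInf
  then show ?thesis
    using s unfolding inv_dom_def retention_def by (auto simp: layer_infinity)
qed (use m in auto)

section \<open>Splitting Lebesgue measure along an indemnity\<close>

text \<open>
  Since \<open>I + retention I\<close> is the identity, the measures \<open>dI\<close> and \<open>d(retention I)\<close> on \<open>[0,\<infinity>)\<close>
  add up to Lebesgue measure. We realise both at once as the image of Lebesgue measure on
  \<open>split_dom I\<close> under \<open>split_inv I\<close>: the positive part is mapped by \<open>gen_inv I\<close>, the
  reflected negative part by \<open>gen_inv (retention I)\<close>.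
\<close>
definition split_dom :: "(real \<Rightarrow> real) \<Rightarrow> real set" where
  "split_dom I = inv_dom I \<union> uminus -` inv_dom (retention I)"

definition split_inv :: "(real \<Rightarrow> real) \<Rightarrow> real \<Rightarrow> real" where
  "split_inv I s = (if s \<in> inv_dom I then gen_inv I s
     else if - s \<in> inv_dom (retention I) then gen_inv (retention I) (- s) else 0)"

context
  fixes I :: "real \<Rightarrow> real"
  assumes I: "I \<in> Ic"
begin

lemma split_inv_less_set:
  "split_dom I \<inter> {s. split_inv I s < a} =
     {0<..<I (max a 0)} \<union> {- retention I (max a 0)<..<0}"
proof -
  let ?R = "retention I"
  have "s \<notin> inv_dom I" if "- s \<in> inv_dom ?R" for s
    using inv_dom_pos[OF that] inv_dom_pos[of s I] by auto
  then have "split_dom I \<inter> {s. split_inv I s < a} =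
      {s \<in> inv_dom I. gen_inv I s < a} \<union> uminus -` {s \<in> inv_dom ?R. gen_inv ?R s < a}"
    unfolding split_dom_def split_inv_def by auto
  also have "\<dots> = {0<..<I (max a 0)} \<union> {- ?R (max a 0)<..<0}"
    unfolding gen_inv_less_set_Ic[OF I] gen_inv_less_set_Ic[OF retention_Ic[OF I]] by auto
  finally show ?thesis .
qed

lemma open_split_dom: "open (split_dom I)"
  unfolding split_dom_def
  by (intro open_Un open_inv_dom open_vimage continuous_intros)

lemma borel_measurable_split_inv [measurable]: "split_inv I \<in> borel_measurable borel"
proof (rule borel_measurable_iff_less[THEN iffD2], intro allI)
  fix a
  have "{s. split_inv I s < a} =
      (split_dom I \<inter> {s. split_inv I s < a}) \<union> (if 0 < a then - split_dom I else {})"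
    unfolding split_dom_def split_inv_def by auto
  also have "\<dots> \<in> sets borel"
    unfolding split_inv_less_set using open_split_dom by auto
  finally show "{s \<in> space borel. split_inv I s < a} \<in> sets borel" by simp
qed

lemma emeasure_split_inv_less:
  "emeasure lborel (split_dom I \<inter> {s. split_inv I s < a}) = ennreal (max a 0)"
proof -
  let ?a = "max a 0" and ?R = "retention I"
  have I0: "0 \<le> I ?a" and R0: "0 \<le> ?R ?a"
    using Ic_bounds[OF I, of ?a] Ic_bounds[OF retention_Ic[OF I], of ?a] by auto
  have "emeasure lborel (split_dom I \<inter> {s. split_inv I s < a}) =
      emeasure lborel {0<..<I ?a} + emeasure lborel {- ?R ?a<..<0}"
    unfolding split_inv_less_set by (rule plus_emeasure[symmetric]) auto
  also have "\<dots> = ennreal (I ?a + ?R ?a)"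
    using I0 R0 by (simp add: ennreal_plus)
  also have "I ?a + ?R ?a = ?a"
    unfolding retention_def by simp
  finally show ?thesis .
qed

lemma distr_split_inv:
  "distr (density lborel (indicator (split_dom I))) borel (split_inv I) =
     density lborel (indicator {0..})"
    (is "?D = ?L")
proof -
  have split_dom_borel: "split_dom I \<in> sets borel"
    using open_split_dom by simp
  have D: "emeasure ?D {..<a} = ennreal (max a 0)" for a
  proof -
    have "emeasure ?D {..<a} = emeasure lborel (split_dom I \<inter> {s. split_inv I s < a})"
      using split_dom_borel
      by (subst emeasure_distr) (auto simp: emeasure_restricted vimage_def Int_def)
    then show ?thesis
      unfolding emeasure_split_inv_less .
  qed
  have L: "emeasure ?L {..<a} = ennreal (max a 0)" for a
  proof -
    have "{0..} \<inter> {..<a} = {0..<max a 0}"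
      by auto
    then show ?thesis
      by (simp add: emeasure_restricted)
  qed
  show ?thesis
  proof (rule measure_eqI_generator_eq[where E = "range lessThan" and \<Omega> = UNIV
        and A = "\<lambda>i. {..<real i}"])
    show "Int_stable (range (lessThan :: real \<Rightarrow> _))"
      by (rule Int_stableI_image) (auto simp: greaterThan_Int_greaterThan)
    show "sets ?D = sigma_sets UNIV (range lessThan)" "sets ?L = sigma_sets UNIV (range lessThan)"
      by (simp_all add: borel_Iio)
    show "emeasure ?D A = emeasure ?L A" if "A \<in> range lessThan" for A
      using that D L by auto
    show "(\<Union>i. {..<real i}) = UNIV"
      by (auto intro: reals_Archimedean2)
    show "emeasure ?D {..<real i} \<noteq> \<infinity>" for i
      using D by simp
  qed auto
qed

end

theorem nn_integral_gen_inv_split: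
  assumes I: "I \<in> Ic" and f [measurable]: "f \<in> borel_measurable borel"
  shows "(\<integral>\<^sup>+s. f (gen_inv I s) * indicator (inv_dom I) s \<partial>lborel) +
         (\<integral>\<^sup>+s. f (gen_inv (retention I) s) * indicator (inv_dom (retention I)) s \<partial>lborel) =
         (\<integral>\<^sup>+t. f t * indicator {0..} t \<partial>lborel)"
proof -
  let ?R = "retention I"
  define h where "h s = f (split_inv I s) * indicator (split_dom I) s" for s
  have [measurable]: "split_dom I \<in> sets borel"
    using open_split_dom[OF I] by simp
  have [measurable]: "split_inv I \<in> borel_measurable borel"
    using borel_measurable_split_inv[OF I] .
  have [measurable]: "h \<in> borel_measurable borel"
    unfolding h_def by measurable
  have pos: "h s * indicator {0<..} s = f (gen_inv I s) * indicator (inv_dom I) s" for s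
    by (cases "s \<in> inv_dom I")
      (auto simp: h_def split_inv_def split_dom_def indicator_def dest: inv_dom_pos)
  have neg: "h (- s) * indicator {..<0} (- s) = f (gen_inv ?R s) * indicator (inv_dom ?R) s" for s
    by (cases "s \<in> inv_dom ?R")
      (auto simp: h_def split_inv_def split_dom_def indicator_def dest: inv_dom_pos)
  have h_split: "h s = h s * indicator {0<..} s + h s * indicator {..<0} s" for s
    by (cases "s \<in> split_dom I")
      (auto simp: h_def split_dom_def indicator_def dest: inv_dom_pos)
  have "(\<integral>\<^sup>+t. f t * indicator {0..} t \<partial>lborel) = (\<integral>\<^sup>+t. f t \<partial>density lborel (indicator {0..}))"
    by (simp add: nn_integral_density mult.commute)
  also have "\<dots> = (\<integral>\<^sup>+s. h s \<partial>lborel)"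
    unfolding distr_split_inv[OF I, symmetric] h_def
    by (simp add: nn_integral_distr nn_integral_density mult.commute)
  also have "\<dots> =
      (\<integral>\<^sup>+s. h s * indicator {0<..} s \<partial>lborel) + (\<integral>\<^sup>+s. h s * indicator {..<0} s \<partial>lborel)"
    by (subst h_split) (rule nn_integral_add; simp)
  also have "(\<integral>\<^sup>+s. h s * indicator {..<0} s \<partial>lborel) =
      (\<integral>\<^sup>+s. h (- s) * indicator {..<0} (- s) \<partial>lborel)"
    by (subst lborel_distr_uminus[symmetric]) (simp add: nn_integral_distr)
  finally show ?thesis
    unfolding pos neg by simp
qed

section \<open>Survival functions and distortion functionals\<close>

lemma borel_measurable_continuous_on_comp:
  assumes g: "continuous_on A g" and F: "F \<in> borel_measurable N"
    and FA: "\<And>x. x \<in> space N \<Longrightarrow> F x \<in> A"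
  shows "(\<lambda>x. g (F x)) \<in> borel_measurable N"
proof -
  have "F \<in> measurable N (restrict_space borel A)"
    using F FA by (intro measurable_restrict_space2) auto
  from measurable_comp[OF this borel_measurable_continuous_on_restrict[OF g]] show ?thesis
    by (simp add: comp_def)
qed

lemma lborel_integral_signed_indicator:
  fixes c :: real
  shows "integrable lborel (\<lambda>t. indicator {0<..c} t - indicator {c<..0} t :: real)"
    and "(\<integral>t. indicator {0<..c} t - indicator {c<..0} t \<partial>lborel) = c"
  by (cases "0 \<le> c"; simp add: Bochner_Integration.integral_diff)+

lemma nn_integral_eq_set_integral:
  fixes f :: "real \<Rightarrow> real"
  assumes "set_integrable lborel A f" "\<And>s. s \<in> A \<Longrightarrow> 0 \<le> f s"
  shows "(\<integral>\<^sup>+s. ennreal (f s) * indicator A s \<partial>lborel) = ennreal (LBINT s:A. f s)"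
    and "0 \<le> (LBINT s:A. f s)"
proof -
  have "(\<integral>\<^sup>+s. ennreal (f s) * indicator A s \<partial>lborel) =
      (\<integral>\<^sup>+s. ennreal (indicator A s * f s) \<partial>lborel)"
    by (intro nn_integral_cong) (simp add: indicator_def)
  also have "\<dots> = ennreal (LBINT s:A. f s)"
    using assms unfolding set_integrable_def set_lebesgue_integral_def
    by (subst nn_integral_eq_integral) (auto simp: indicator_def)
  finally show "(\<integral>\<^sup>+s. ennreal (f s) * indicator A s \<partial>lborel) = ennreal (LBINT s:A. f s)" .
  show "0 \<le> (LBINT s:A. f s)"
    using assms(2) unfolding set_lebesgue_integral_def
    by (intro integral_nonneg_AE) (simp add: indicator_def)
qed

lemma surv_nonneg: "0 \<le> surv M Y t"
  unfolding surv_def by simp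

lemma surv_comp:
  assumes mono: "mono_on {0..} \<phi>" and cont: "continuous_on {0..} \<phi>" and zero: "\<phi> 0 = 0"
    and Y: "\<forall>\<omega>\<in>space M. 0 \<le> Y \<omega>" and s: "0 < s"
  shows "surv M (\<lambda>\<omega>. \<phi> (Y \<omega>)) s = (if s \<in> inv_dom \<phi> then surv M Y (gen_inv \<phi> s) else 0)"
proof (cases "s \<in> inv_dom \<phi>")
  case True
  then have "{\<omega> \<in> space M. s < \<phi> (Y \<omega>)} = {\<omega> \<in> space M. gen_inv \<phi> s < Y \<omega>}"
    using gen_inv_less_iff[OF mono cont zero True] Y by auto
  then show ?thesis
    using True unfolding surv_def by simp
next
  case False
  then have empty: "{\<omega> \<in> space M. s < \<phi> (Y \<omega>)} = {}"
    using s Y unfolding inv_dom_def by auto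
  show ?thesis
    using False unfolding surv_def by (simp only: empty measure_empty if_False)
qed

context prob_space
begin

lemma surv_le_1: "surv M Y t \<le> 1"
  unfolding surv_def by simp

lemma surv_antimono: "Y \<in> borel_measurable M \<Longrightarrow> t \<le> t' \<Longrightarrow> surv M Y t' \<le> surv M Y t"
  unfolding surv_def by (intro finite_measure_mono) auto

lemma borel_measurable_surv [measurable]:
  assumes "Y \<in> borel_measurable M"
  shows "surv M Y \<in> borel_measurable borel"
proof -
  have "mono (\<lambda>t. - surv M Y t)"
    by (rule monoI) (simp add: surv_antimono[OF assms])
  then have "(\<lambda>t. - surv M Y t) \<in> borel_measurable borel"
    by (rule borel_measurable_mono)
  then have "(\<lambda>t. - (- surv M Y t)) \<in> borel_measurable borel"
    by measurable
  then show ?thesis by simp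
qed

lemma borel_measurable_distorted_surv:
  assumes "continuous_on {0..1} g" "Y \<in> borel_measurable M"
  shows "(\<lambda>t. g (surv M Y t)) \<in> borel_measurable borel"
  using assms by (rule borel_measurable_continuous_on_comp[OF _ borel_measurable_surv])
    (auto simp: surv_nonneg surv_le_1)

lemma rho_nonneg_eq:
  assumes "\<forall>\<omega>\<in>space M. 0 \<le> Y \<omega>"
  shows "rho j M Y = (LBINT t:{0<..}. j (surv M Y t))"
proof -
  have surv_neg: "surv M Y t = 1" if "t < 0" for t
  proof -
    have "{\<omega> \<in> space M. t < Y \<omega>} = space M"
      using assms that by force
    then show ?thesis
      unfolding surv_def by (simp add: prob_space)
  qed
  have "AE t in lborel. indicator {..0} t *\<^sub>R (j (surv M Y t) - j 1) = 0"
    using AE_lborel_singleton[of 0] by eventually_elim (auto simp: indicator_def surv_neg)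
  then show ?thesis
    unfolding rho_def set_lebesgue_integral_def by (simp add: integral_eq_zero_AE)
qed

lemma AE_prob_ge_eq_surv:
  assumes [measurable]: "Y \<in> borel_measurable M"
  shows "AE s in lborel. prob {\<omega> \<in> space M. s \<le> Y \<omega>} = surv M Y s"
proof -
  interpret D: prob_space "distr M borel Y"
    by (rule prob_space_distr) simp
  have atoms: "countable {s. measure (distr M borel Y) {s} \<noteq> 0}"
    by (rule D.countable_support)
  have "prob {\<omega> \<in> space M. s \<le> Y \<omega>} = surv M Y s"
    if "measure (distr M borel Y) {s} = 0" for s
  proof -
    have "measure (distr M borel Y) {s} = prob {\<omega> \<in> space M. Y \<omega> = s}"
      by (subst measure_distr) (auto intro!: arg_cong[where f = prob])
    moreover have "{\<omega> \<in> space M. s \<le> Y \<omega>} = {\<omega> \<in> space M. s < Y \<omega>} \<union> {\<omega> \<in> space M. Y \<omega> = s}"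
      by auto
    moreover have "prob ({\<omega> \<in> space M. s < Y \<omega>} \<union> {\<omega> \<in> space M. Y \<omega> = s}) =
        prob {\<omega> \<in> space M. s < Y \<omega>} + prob {\<omega> \<in> space M. Y \<omega> = s}"
      by (rule finite_measure_Union) auto
    ultimately show ?thesis
      using that unfolding surv_def by simp
  qed
  then show ?thesis
    by (intro AE_I'[OF countable_imp_null_set_lborel[OF atoms]]) auto
qed


lemma expectation_eq_LBINT_surv:
  assumes [measurable]: "Y \<in> borel_measurable M"
    and nonneg: "\<forall>\<omega>\<in>space M. 0 \<le> Y \<omega>" and int: "integrable M Y"
  shows "set_integrable lborel {0<..} (surv M Y)"
    and "expectation Y = (LBINT t:{0<..}. surv M Y t)"
proof -
  interpret pair_sigma_finite M lborel ..
  have [measurable]: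
    "(\<lambda>(\<omega>, t). indicator {0<..<Y \<omega>} t :: ennreal) \<in> borel_measurable (M \<Otimes>\<^sub>M lborel)"
  proof -
    have "(\<lambda>(\<omega>, t). indicator {0<..<Y \<omega>} t :: ennreal) =
        (\<lambda>x. if 0 < snd x \<and> snd x < Y (fst x) then 1 else 0)"
      by (auto simp: indicator_def fun_eq_iff)
    then show ?thesis by simp
  qed
  have "(\<integral>\<^sup>+\<omega>. ennreal (Y \<omega>) \<partial>M) = (\<integral>\<^sup>+\<omega>. (\<integral>\<^sup>+t. indicator {0<..<Y \<omega>} t \<partial>lborel) \<partial>M)"
    using nonneg by (intro nn_integral_cong) simp
  also have "\<dots> = (\<integral>\<^sup>+t. (\<integral>\<^sup>+\<omega>. indicator {0<..<Y \<omega>} t \<partial>M) \<partial>lborel)"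
    by (rule Fubini'[symmetric]) simp
  also have "\<dots> = (\<integral>\<^sup>+t. ennreal (indicator {0<..} t * surv M Y t) \<partial>lborel)"
  proof (rule nn_integral_cong)
    fix t :: real
    have "(\<integral>\<^sup>+\<omega>. indicator {0<..<Y \<omega>} t \<partial>M) =
        (\<integral>\<^sup>+\<omega>. indicator {\<omega> \<in> space M. 0 < t \<and> t < Y \<omega>} \<omega> \<partial>M)"
      by (rule nn_integral_cong) (auto simp: indicator_def)
    also have "\<dots> = emeasure M {\<omega> \<in> space M. 0 < t \<and> t < Y \<omega>}"
      by (rule nn_integral_indicator) measurable
    finally show "(\<integral>\<^sup>+\<omega>. indicator {0<..<Y \<omega>} t \<partial>M) = ennreal (indicator {0<..} t * surv M Y t)"
      unfolding surv_def by (cases "0 < t") (auto simp: emeasure_eq_measure)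
  qed
  finally have "(\<integral>\<^sup>+t. ennreal (indicator {0<..} t * surv M Y t) \<partial>lborel) = ennreal (expectation Y)"
    using nonneg by (simp add: nn_integral_eq_integral[OF int])
  then have "integrable lborel (\<lambda>t. indicator {0<..} t * surv M Y t) \<and>
      (\<integral>t. indicator {0<..} t * surv M Y t \<partial>lborel) = expectation Y"
    using nonneg by (subst nn_integral_eq_integrable[symmetric])
      (auto simp: surv_nonneg intro!: integral_nonneg_AE)
  then show "set_integrable lborel {0<..} (surv M Y)" "expectation Y = (LBINT t:{0<..}. surv M Y t)"
    unfolding set_integrable_def set_lebesgue_integral_def by simp_all
qed

lemma distorted_surv_const_minus:
  fixes c :: real and j :: "real \<Rightarrow> real"
  assumes j: "j 0 = 0" "j 1 = 1"
    and Y [measurable]: "Y \<in> borel_measurable M" and nonneg: "\<forall>\<omega>\<in>space M. 0 \<le> Y \<omega>"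
  shows "indicator {..0} t * (j (surv M (\<lambda>\<omega>. c - Y \<omega>) t) - j 1) +
      indicator {0<..} t * j (surv M (\<lambda>\<omega>. c - Y \<omega>) t) =
    (indicator {0<..c} t - indicator {c<..0} t) -
      indicator {0..} (c - t) * (1 - j (1 - prob {\<omega> \<in> space M. c - t \<le> Y \<omega>}))"
proof -
  define Q where "Q = prob {\<omega> \<in> space M. c - t \<le> Y \<omega>}"
  have "{\<omega> \<in> space M. t < c - Y \<omega>} = space M - {\<omega> \<in> space M. c - t \<le> Y \<omega>}"
    by auto
  then have surv: "surv M (\<lambda>\<omega>. c - Y \<omega>) t = 1 - Q"
    unfolding surv_def Q_def by (simp add: prob_compl)
  have Q_1: "Q = 1" if "c \<le> t"
  proof -
    have "{\<omega> \<in> space M. c - t \<le> Y \<omega>} = space M"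
      using nonneg that by force
    then show ?thesis
      unfolding Q_def by (simp add: prob_space)
  qed
  show ?thesis
    unfolding surv Q_def[symmetric] using j Q_1
    by (cases "t \<le> 0"; cases "t \<le> c") (auto simp: indicator_def)
qed

text \<open>
  The survival function of \<open>c - Y\<close> is read off the non-strict tail \<open>P(Y \<ge> s)\<close>; below it
  is replaced by \<open>surv M Y s\<close>, which differs from it only at the countably many atoms of \<open>Y\<close>.
\<close>
lemma rho_const_minus_tail:
  fixes c :: real
  assumes j: "j 0 = 0" "j 1 = 1"
    and Y: "Y \<in> borel_measurable M" and nonneg: "\<forall>\<omega>\<in>space M. 0 \<le> Y \<omega>"
    and int_neg: "set_integrable lborel {..0} (\<lambda>t. j (surv M (\<lambda>\<omega>. c - Y \<omega>) t) - j 1)"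
    and int_pos: "set_integrable lborel {0<..} (\<lambda>t. j (surv M (\<lambda>\<omega>. c - Y \<omega>) t))"
  shows "set_integrable lborel {0..} (\<lambda>s. 1 - j (1 - prob {\<omega> \<in> space M. s \<le> Y \<omega>}))"
    and "rho j M (\<lambda>\<omega>. c - Y \<omega>) =
      c - (LBINT s:{0..}. 1 - j (1 - prob {\<omega> \<in> space M. s \<le> Y \<omega>}))"
proof -
  let ?tail = "\<lambda>s. 1 - j (1 - prob {\<omega> \<in> space M. s \<le> Y \<omega>})"
  define F where "F t = indicator {..0} t * (j (surv M (\<lambda>\<omega>. c - Y \<omega>) t) - j 1) +
    indicator {0<..} t * j (surv M (\<lambda>\<omega>. c - Y \<omega>) t)" for t :: real
  define H where "H t = indicator {0..} (c - t) * ?tail (c - t)" for t :: real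
  have F_int: "integrable lborel F"
    using int_neg int_pos unfolding F_def set_integrable_def by simp
  have rho_F: "rho j M (\<lambda>\<omega>. c - Y \<omega>) = (\<integral>t. F t \<partial>lborel)"
    using int_neg int_pos
    unfolding rho_def F_def set_integrable_def set_lebesgue_integral_def by simp
  have H_eq: "H t = (indicator {0<..c} t - indicator {c<..0} t) - F t" for t
    unfolding F_def H_def distorted_surv_const_minus[OF j Y nonneg] by simp
  have H_int: "integrable lborel H"
    unfolding H_eq using lborel_integral_signed_indicator(1) F_int by simp
  have H_integral: "(\<integral>t. H t \<partial>lborel) = c - (\<integral>t. F t \<partial>lborel)"
    unfolding H_eq using lborel_integral_signed_indicator F_int
    by (simp add: Bochner_Integration.integral_diff)
  have H_reflect: "H (c + (-1) * s) = indicator {0..} s * ?tail s" for s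
    unfolding H_def by simp
  show "set_integrable lborel {0..} ?tail"
    using H_int lborel_integrable_real_affine_iff[of "-1" H c]
    unfolding set_integrable_def H_reflect by simp
  have "(\<integral>t. H t \<partial>lborel) = (\<integral>s. H (c + (-1) * s) \<partial>lborel)"
    using lborel_integral_real_affine[of "-1" H c] by simp
  then show "rho j M (\<lambda>\<omega>. c - Y \<omega>) = c - (LBINT s:{0..}. ?tail s)"
    unfolding rho_F set_lebesgue_integral_def H_reflect using H_integral by simp
qed

lemma rho_const_minus:
  fixes c :: real
  assumes j: "continuous_on {0..1} j" "j 0 = 0" "j 1 = 1"
    and Y [measurable]: "Y \<in> borel_measurable M" and nonneg: "\<forall>\<omega>\<in>space M. 0 \<le> Y \<omega>"
    and int_neg: "set_integrable lborel {..0} (\<lambda>t. j (surv M (\<lambda>\<omega>. c - Y \<omega>) t) - j 1)"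
    and int_pos: "set_integrable lborel {0<..} (\<lambda>t. j (surv M (\<lambda>\<omega>. c - Y \<omega>) t))"
  shows "set_integrable lborel {0<..} (\<lambda>s. 1 - j (1 - surv M Y s))"
    and "rho j M (\<lambda>\<omega>. c - Y \<omega>) = c - (LBINT s:{0<..}. 1 - j (1 - surv M Y s))"
proof -
  let ?tail = "\<lambda>s. 1 - j (1 - prob {\<omega> \<in> space M. s \<le> Y \<omega>})"
  note tail = rho_const_minus_tail[OF j(2,3) Y nonneg int_neg int_pos]
  have "continuous_on {0..1} (\<lambda>p. 1 - j (1 - p))"
    using j(1) by (intro continuous_intros continuous_on_compose2[OF j(1)]) auto
  then have [measurable]: "(\<lambda>s. 1 - j (1 - surv M Y s)) \<in> borel_measurable borel"
    using borel_measurable_distorted_surv[OF _ Y] by blast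
  have [measurable]: "(\<lambda>s. indicator {0..} s * ?tail s) \<in> borel_measurable borel"
    using borel_measurable_integrable[OF tail(1)[unfolded set_integrable_def]] by simp
  have AE: "AE s in lborel.
      indicator {0..} s *\<^sub>R ?tail s = indicator {0<..} s *\<^sub>R (1 - j (1 - surv M Y s))"
    using AE_prob_ge_eq_surv[OF Y] AE_lborel_singleton[of 0]
    by eventually_elim (auto simp: indicator_def)
  show "set_integrable lborel {0<..} (\<lambda>s. 1 - j (1 - surv M Y s))"
    using tail(1) integrable_cong_AE[OF _ _ AE] unfolding set_integrable_def by simp
  have "(LBINT s:{0..}. ?tail s) = (LBINT s:{0<..}. 1 - j (1 - surv M Y s))"
    unfolding set_lebesgue_integral_def by (rule integral_cong_AE[OF _ _ AE]) simp_all
  then show "rho j M (\<lambda>\<omega>. c - Y \<omega>) = c - (LBINT s:{0<..}. 1 - j (1 - surv M Y s))"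
    using tail(2) by simp
qed

end

section \<open>Distortions ordered by hazard rate\<close>

locale distortion_pair =
  fixes \<theta> :: real and k b :: "real \<Rightarrow> real"
  assumes theta: "\<theta> > -1"
    and k_cont: "continuous_on {0..1} k" and k_nonneg: "\<And>p. p \<in> {0..1} \<Longrightarrow> 0 \<le> k p"
    and k_0: "k 0 = 0"
    and b_cont: "continuous_on {0..1} b" and b_mono: "strict_mono_on {0..1} b"
    and b_0: "b 0 = 0" and b_1: "b 1 = 1"
    and hazard_order: "mono_on {0<..<1} (\<lambda>p. (1 - b (1 - p)) / ((1 + \<theta>) * p + k p))"
begin

definition kt :: "real \<Rightarrow> real" where
  "kt p = (1 + \<theta>) * p + k p"

definition bt :: "real \<Rightarrow> real" where
  "bt p = 1 - b (1 - p)"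

definition mt :: "real \<Rightarrow> real" where
  "mt p = min (kt p) (bt p)"

lemma kt_0: "kt 0 = 0" and bt_0: "bt 0 = 0"
  by (simp_all add: kt_def bt_def k_0 b_1)

lemma kt_pos: "0 < p \<Longrightarrow> p \<le> 1 \<Longrightarrow> 0 < kt p"
  unfolding kt_def using theta k_nonneg[of p] by (simp add: add_pos_nonneg)

lemma kt_nonneg: "0 \<le> p \<Longrightarrow> p \<le> 1 \<Longrightarrow> 0 \<le> kt p"
  unfolding kt_def using theta k_nonneg[of p] by simp

lemma bt_nonneg: "0 \<le> p \<Longrightarrow> p \<le> 1 \<Longrightarrow> 0 \<le> bt p"
  unfolding bt_def using strict_mono_onD[OF b_mono, of "1 - p" 1] b_1 by (cases "p = 0") auto

lemma kt_cont: "continuous_on {0..1} kt"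
  unfolding kt_def by (intro continuous_intros k_cont)

lemma bt_cont: "continuous_on {0..1} bt"
  unfolding bt_def
  by (intro continuous_intros continuous_on_compose2[OF b_cont]) auto

text \<open>At \<open>p = 1\<close>, which \<open>hazard_order\<close> does not cover, we argue by continuity.\<close>
lemma bt_less_kt_downward:
  assumes q: "0 < q" "q \<le> p" and p: "p \<le> 1" and less: "bt p < kt p"
  shows "bt q < kt q"
proof -
  have from_interior: "bt q < kt q" if p': "q \<le> p'" "p' < 1" "bt p' < kt p'" for p'
  proof -
    have "bt q / kt q \<le> bt p' / kt p'"
      using mono_onD[OF hazard_order, of q p'] p' q unfolding bt_def kt_def by simp
    also have "\<dots> < 1"
      using p' kt_pos[of p'] q by simp
    finally show ?thesis
      using kt_pos[of q] q p' by (simp add: divide_less_eq)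
  qed
  consider "q = p" | "p < 1" | "q < p" "p = 1"
    using q p by linarith
  then show ?thesis
  proof cases
    case 1
    then show ?thesis using less by simp
  next
    case 2
    then show ?thesis using from_interior[of p] q less by simp
  next
    case 3
    have "continuous_on {0..1} (\<lambda>x. kt x - bt x)"
      by (intro continuous_intros kt_cont bt_cont)
    then obtain d where d: "0 < d"
      "\<And>x. x \<in> {0..1} \<Longrightarrow> dist x 1 < d \<Longrightarrow> dist (kt x - bt x) (kt 1 - bt 1) < kt 1 - bt 1"
      using less 3 unfolding continuous_on_iff
      by (metis atLeastAtMost_iff diff_gt_0_iff_gt order_refl zero_le_one)
    define p' where "p' = max q (1 - d / 2)"
    have p': "q \<le> p'" "p' < 1" "0 \<le> p'" "dist p' 1 < d"
      using 3 q d(1) by (auto simp: p'_def dist_real_def)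
    then have "bt p' < kt p'"
      using d(2)[of p'] unfolding dist_real_def by auto
    with p' show ?thesis
      by (intro from_interior) auto
  qed
qed

end

section \<open>Optimality of layers\<close>

locale layer_optimality = distortion_pair \<theta> k b + prob_space M
  for \<theta> :: real and k b :: "real \<Rightarrow> real" and M :: "'a measure" +
  fixes X :: "'a \<Rightarrow> real"
  assumes X [measurable]: "X \<in> borel_measurable M"
    and X_nonneg: "\<forall>\<omega>\<in>space M. 0 \<le> X \<omega>" and X_int: "integrable M X"
begin

lemma Ic_comp_measurable [measurable]: "I \<in> Ic \<Longrightarrow> (\<lambda>\<omega>. I (X \<omega>)) \<in> borel_measurable M"
  by (rule borel_measurable_continuous_on_comp[OF Ic_continuous_on X]) (auto simp: X_nonneg)

lemma Ic_comp_nonneg: "I \<in> Ic \<Longrightarrow> \<forall>\<omega>\<in>space M. 0 \<le> I (X \<omega>)"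
  using Ic_bounds X_nonneg by blast

lemma Ic_comp_integrable:
  assumes I: "I \<in> Ic"
  shows "integrable M (\<lambda>\<omega>. I (X \<omega>))"
proof (rule Bochner_Integration.integrable_bound[OF X_int])
  have "norm (I (X \<omega>)) \<le> norm (X \<omega>)" if "\<omega> \<in> space M" for \<omega>
    using Ic_bounds[OF I bspec[OF X_nonneg that]] bspec[OF X_nonneg that] by simp
  then show "AE \<omega> in M. norm (I (X \<omega>)) \<le> norm (X \<omega>)"
    by (rule AE_I2)
qed (use I in measurable)

lemma premium_eq_LBINT_kt:
  assumes I: "I \<in> Ic"
    and int_k: "set_integrable lborel {0<..} (\<lambda>t. k (surv M (\<lambda>\<omega>. I (X \<omega>)) t))"
  shows "set_integrable lborel {0<..} (\<lambda>t. kt (surv M (\<lambda>\<omega>. I (X \<omega>)) t))"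
    and "premium \<theta> k M (\<lambda>\<omega>. I (X \<omega>)) = (LBINT t:{0<..}. kt (surv M (\<lambda>\<omega>. I (X \<omega>)) t))"
proof -
  let ?S = "surv M (\<lambda>\<omega>. I (X \<omega>))"
  note E = expectation_eq_LBINT_surv[OF Ic_comp_measurable[OF I] Ic_comp_nonneg[OF I]
      Ic_comp_integrable[OF I]]
  have int_S: "set_integrable lborel {0<..} (\<lambda>t. (1 + \<theta>) * ?S t)"
    using E(1) by (rule set_integrable_mult_right)
  show "set_integrable lborel {0<..} (\<lambda>t. kt (?S t))"
    unfolding kt_def using int_S int_k by (rule set_integral_add(1))
  have "(LBINT t:{0<..}. kt (?S t)) = (LBINT t:{0<..}. (1 + \<theta>) * ?S t) + (LBINT t:{0<..}. k (?S t))"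
    unfolding kt_def using int_S int_k by (rule set_integral_add(2))
  then show "premium \<theta> k M (\<lambda>\<omega>. I (X \<omega>)) = (LBINT t:{0<..}. kt (?S t))"
    unfolding premium_def using E(2) rho_nonneg_eq[OF Ic_comp_nonneg[OF I], where j = k] by simp
qed

definition cost :: "(real \<Rightarrow> real) \<Rightarrow> ennreal" where
  "cost I = (\<integral>\<^sup>+t. ennreal (kt (surv M (\<lambda>\<omega>. I (X \<omega>)) t)) * indicator {0<..} t \<partial>lborel) +
            (\<integral>\<^sup>+t. ennreal (bt (surv M (\<lambda>\<omega>. retention I (X \<omega>)) t)) * indicator {0<..} t \<partial>lborel)"

lemma cost_eq_rho_wealth:
  assumes I: "I \<in> Ic"
    and int_k: "set_integrable lborel {0<..} (\<lambda>t. k (surv M (\<lambda>\<omega>. I (X \<omega>)) t))"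
    and int_neg: "set_integrable lborel {..0} (\<lambda>t. b (surv M (wealth w \<theta> k M X I) t) - b 1)"
    and int_pos: "set_integrable lborel {0<..} (\<lambda>t. b (surv M (wealth w \<theta> k M X I) t))"
  shows "cost I = ennreal (w - rho b M (wealth w \<theta> k M X I))"
    and "rho b M (wealth w \<theta> k M X I) \<le> w"
proof -
  let ?c = "w - premium \<theta> k M (\<lambda>\<omega>. I (X \<omega>))"
  let ?R = "retention I"
  have wealth: "wealth w \<theta> k M X I = (\<lambda>\<omega>. ?c - ?R (X \<omega>))"
    unfolding wealth_def retention_def by (simp add: fun_eq_iff)
  note P = premium_eq_LBINT_kt[OF I int_k]
  note W = rho_const_minus[OF b_cont b_0 b_1 Ic_comp_measurable[OF retention_Ic[OF I]]
      Ic_comp_nonneg[OF retention_Ic[OF I]] int_neg[unfolded wealth] int_pos[unfolded wealth]]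
  let ?A = "LBINT t:{0<..}. kt (surv M (\<lambda>\<omega>. I (X \<omega>)) t)"
  let ?B = "LBINT t:{0<..}. bt (surv M (\<lambda>\<omega>. ?R (X \<omega>)) t)"
  have rho: "rho b M (wealth w \<theta> k M X I) = w - (?A + ?B)"
    unfolding wealth W(2) by (simp add: P(2) bt_def)
  note A = nn_integral_eq_set_integral[OF P(1) kt_nonneg[OF surv_nonneg surv_le_1]]
  note B = nn_integral_eq_set_integral[OF W(1)[folded bt_def] bt_nonneg[OF surv_nonneg surv_le_1]]
  from A(2) B(2) show "cost I = ennreal (w - rho b M (wealth w \<theta> k M X I))"
    "rho b M (wealth w \<theta> k M X I) \<le> w"
    unfolding cost_def A(1) B(1) rho by (simp_all add: ennreal_plus)
qed

lemma borel_measurable_mt_surv [measurable]: "(\<lambda>t. mt (surv M X t)) \<in> borel_measurable borel"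
proof -
  have "continuous_on {0..1} mt"
    unfolding mt_def by (intro continuous_intros kt_cont bt_cont)
  then show ?thesis
    by (rule borel_measurable_distorted_surv[OF _ X])
qed

lemma nn_integral_surv_comp:
  assumes I: "I \<in> Ic" and g: "g 0 = 0"
  shows "(\<integral>\<^sup>+t. ennreal (g (surv M (\<lambda>\<omega>. I (X \<omega>)) t)) * indicator {0<..} t \<partial>lborel) =
         (\<integral>\<^sup>+s. ennreal (g (surv M X (gen_inv I s))) * indicator (inv_dom I) s \<partial>lborel)"
proof (rule nn_integral_cong)
  fix s :: real
  show "ennreal (g (surv M (\<lambda>\<omega>. I (X \<omega>)) s)) * indicator {0<..} s =
      ennreal (g (surv M X (gen_inv I s))) * indicator (inv_dom I) s"
    using surv_comp[OF Ic_mono_on[OF I] Ic_continuous_on[OF I] Ic_zero[OF I] X_nonneg, of s]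
      g inv_dom_pos[of s I] by (cases "0 < s") (auto simp: indicator_def)
qed

lemma cost_gen_inv:
  assumes I: "I \<in> Ic"
  shows "cost I =
    (\<integral>\<^sup>+s. ennreal (kt (surv M X (gen_inv I s))) * indicator (inv_dom I) s \<partial>lborel) +
    (\<integral>\<^sup>+s. ennreal (bt (surv M X (gen_inv (retention I) s))) *
       indicator (inv_dom (retention I)) s \<partial>lborel)"
  unfolding cost_def nn_integral_surv_comp[where g = kt, OF I kt_0]
    nn_integral_surv_comp[where g = bt, OF retention_Ic[OF I] bt_0] ..

definition min_cost :: ennreal where
  "min_cost = (\<integral>\<^sup>+t. ennreal (mt (surv M X t)) * indicator {0..} t \<partial>lborel)"

lemma min_cost_gen_inv:
  assumes I: "I \<in> Ic"
  shows "min_cost =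
    (\<integral>\<^sup>+s. ennreal (mt (surv M X (gen_inv I s))) * indicator (inv_dom I) s \<partial>lborel) +
    (\<integral>\<^sup>+s. ennreal (mt (surv M X (gen_inv (retention I) s))) *
       indicator (inv_dom (retention I)) s \<partial>lborel)"
  unfolding min_cost_def
  by (rule nn_integral_gen_inv_split[OF I, symmetric]) measurable

lemma min_cost_le_cost:
  assumes I: "I \<in> Ic"
  shows "min_cost \<le> cost I"
  unfolding min_cost_gen_inv[OF I] cost_gen_inv[OF I]
  by (intro add_mono nn_integral_mono) (auto simp: mt_def indicator_def ennreal_leI)

definition threshold :: ereal where
  "threshold = Inf (ereal ` {t. 0 \<le> t \<and> bt (surv M X t) < kt (surv M X t)})"

lemma threshold_nonneg: "0 \<le> threshold"
  unfolding threshold_def by (rule Inf_greatest) auto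

lemma kt_le_bt_below_threshold:
  assumes "0 \<le> t" "ereal t < threshold"
  shows "kt (surv M X t) \<le> bt (surv M X t)"
proof (rule ccontr)
  assume "\<not> ?thesis"
  then have "threshold \<le> ereal t"
    unfolding threshold_def using assms(1) by (intro Inf_lower) auto
  then show False
    using assms(2) by simp
qed

lemma bt_le_kt_above_threshold:
  assumes "threshold < ereal t"
  shows "bt (surv M X t) \<le> kt (surv M X t)"
proof -
  obtain t' where t': "0 \<le> t'" "bt (surv M X t') < kt (surv M X t')" "t' < t"
    using assms unfolding threshold_def Inf_less_iff by auto
  have "surv M X t \<le> surv M X t'"
    using surv_antimono[OF X] t'(3) by simp
  then show ?thesis
    using bt_less_kt_downward[of "surv M X t" "surv M X t'"] t'(2) surv_le_1[of X t']
      surv_nonneg[of M X t] by (cases "surv M X t = 0") (auto simp: kt_0 bt_0)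
qed

lemma cost_layer_threshold: "cost (layer threshold) = min_cost"
proof -
  let ?L = "layer threshold" and ?R = "retention (layer threshold)"
  have L: "?L \<in> Ic"
    by (rule layer_Ic[OF threshold_nonneg])
  have "mt (surv M X (gen_inv ?L s)) = kt (surv M X (gen_inv ?L s))" if s: "s \<in> inv_dom ?L" for s
    using kt_le_bt_below_threshold[OF gen_inv_nonneg_Ic[OF L s]
        gen_inv_layer_less[OF threshold_nonneg s]]
    by (simp add: mt_def)
  moreover have "mt (surv M X (gen_inv ?R s)) = bt (surv M X (gen_inv ?R s))"
    if s: "s \<in> inv_dom ?R" for s
    using bt_le_kt_above_threshold[OF less_gen_inv_retention_layer[OF threshold_nonneg s]]
    by (simp add: mt_def)
  ultimately show ?thesis
    unfolding min_cost_gen_inv[OF L] cost_gen_inv[OF L]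
    by (intro arg_cong2[where f = "(+)"] nn_integral_cong) (simp_all split: split_indicator)
qed

end

theorem corollary3p3:
  fixes M :: "'a measure" and X :: "'a \<Rightarrow> real"
    and \<theta> w :: real and k b :: "real \<Rightarrow> real"
  assumes "prob_space M"
    and "X \<in> borel_measurable M"
    and "\<forall>\<omega>\<in>space M. X \<omega> \<ge> 0"
    and "integrable M X"
    and "\<theta> > -1"
    and "continuous_on {0..1} k" and "concave_on {0..1} k"
    and "\<forall>p\<in>{0..1}. k p \<ge> 0" and "k 0 = 0" and "k 1 = 0"
    and "\<exists>b'. continuous_on {0..1} b' \<and>
              (\<forall>p\<in>{0..1}. (b has_real_derivative b' p) (at p within {0..1}))"
    and "strict_mono_on {0..1} b" and "convex_on {0..1} b"
    and "b 0 = 0" and "b 1 = 1"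
    and hr: "mono_on {0<..<1} (\<lambda>p. (1 - b (1 - p)) / ((1 + \<theta>) * p + k p))"
    and fin_k: "\<forall>I\<in>Ic. set_integrable lborel {0<..} (\<lambda>t. k (surv M (\<lambda>\<omega>. I (X \<omega>)) t))"
    and fin_b: "\<forall>I\<in>Ic.
        set_integrable lborel {..0} (\<lambda>t. b (surv M (wealth w \<theta> k M X I) t) - b 1) \<and>
        set_integrable lborel {0<..} (\<lambda>t. b (surv M (wealth w \<theta> k M X I) t))"
  shows "\<exists>m::ereal. m \<ge> 0 \<and> layer m \<in> Ic \<and>
           (\<forall>I\<in>Ic. rho b M (wealth w \<theta> k M X I) \<le> rho b M (wealth w \<theta> k M X (layer m)))"
proof -
  obtain b' where "\<forall>p\<in>{0..1}. (b has_real_derivative b' p) (at p within {0..1})"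
    using assms(11) by blast
  then have b_cont: "continuous_on {0..1} b"
    by (intro DERIV_continuous_on) auto
  have distortions: "distortion_pair \<theta> k b"
    using assms(5,6,8,9,12,14,15) hr b_cont by (simp add: distortion_pair_def)
  interpret layer_optimality \<theta> k b M X
    by (intro layer_optimality.intro layer_optimality_axioms.intro distortions assms(1-4))
  have layer: "layer threshold \<in> Ic"
    by (rule layer_Ic[OF threshold_nonneg])
  show ?thesis
  proof (intro exI[of _ threshold] conjI ballI threshold_nonneg layer)
    fix I assume I: "I \<in> Ic"
    note cost_I = cost_eq_rho_wealth[OF I fin_k[rule_format, OF I]
        fin_b[rule_format, OF I, THEN conjunct1] fin_b[rule_format, OF I, THEN conjunct2]]
    note cost_layer = cost_eq_rho_wealth[OF layer fin_k[rule_format, OF layer]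
        fin_b[rule_format, OF layer, THEN conjunct1] fin_b[rule_format, OF layer, THEN conjunct2]]
    have "cost (layer threshold) \<le> cost I"
      using min_cost_le_cost[OF I] by (simp add: cost_layer_threshold)
    then show "rho b M (wealth w \<theta> k M X I) \<le> rho b M (wealth w \<theta> k M X (layer threshold))"
      using cost_I cost_layer by (simp add: ennreal_le_iff)
  qed
qed

end
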